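(* Let $E\in\mathcal O((0,1])$ be non-empty. Then $E$ is locally ergodic with respect to $\mathcal G^{\mathrm{dyad}}_E$.
   Context: Dyadic intervals $I_k^d=((k-1)2^{-d},k2^{-d}]$, $d\ge0$, $1\le k\le2^d$. $\mathcal O((0,1])$ is the system of all unions of dyadic intervals (including $\emptyset$). $\mathcal G^{\mathrm{dyad}}$ is the group of maps $g_\pi:(0,1]\to(0,1]$, $g_\pi(t)=\pi(k)2^{-d}-(k2^{-d}-t)$ for $t\in I^d_k$, where $d\ge0$ and $\pi$ is a permutation of $\{1,\dots,2^d\}$; for $E\subseteq(0,1]$, $\mathcal G^{\mathrm{dyad}}_E=\{g\in\mathcal G^{\mathrm{dyad}}:g|_{E^c}=\mathrm{id}\}$. Let $\mathcal F^{\mathrm{dyad}}_N=\sigma(I^N_l:l=1,\dots,2^N)$ and $\lambda$ the Lebesgue measure. For a group $\mathbb G$ of such maps, a Borel set $E$ with $\lambda(E)>0$ is finite locally ergodic w.r.t. $\mathbb G$ if there is $N_E$ with $E\in\mathcal F^{\mathrm{dyad}}_{N_E}$ such that for all $N\ge N_E$ and $l\ne m$ with $A=I^N_l\cup I^N_m\subseteq E$ there is a subgroup $\mathbb H\subseteq\mathbb G$ whose elements are the identity on $A^c$ and such that every Borel $B\subseteq A$ with $h^{-1}(B)=B$ for all $h\in\mathbb H$ satisfies $\lambda(B)\in\{0,\lambda(A)\}$. $E$ is locally ergodic w.r.t. $\mathbb G$ if it is the union of an increasing sequence of finite locally ergodic subsets. *)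

theory Defs
  imports "HOL-Analysis.Analysis" "HOL-Combinatorics.Permutations"
begin

definition dyad_int :: "nat \<Rightarrow> nat \<Rightarrow> real set" where
  "dyad_int d k = {t. (real k - 1) / 2 ^ d < t \<and> t \<le> real k / 2 ^ d}"

definition dyad_open_sets :: "real set set" where
  "dyad_open_sets = {\<Union>S | S. S \<subseteq> {dyad_int d k | d k. 1 \<le> k \<and> k \<le> 2 ^ d}}"

text \<open>The map g_pi on (0,1]; we extend it by the identity outside (0,1].\<close>
definition dyad_map :: "nat \<Rightarrow> (nat \<Rightarrow> nat) \<Rightarrow> real \<Rightarrow> real" where
  "dyad_map d \<pi> t =
     (if t \<in> {0<..1} then
        (let k = (THE k. 1 \<le> k \<and> k \<le> 2 ^ d \<and> t \<in> dyad_int d k)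
         in real (\<pi> k) / 2 ^ d - (real k / 2 ^ d - t))
      else t)"

definition G_dyad :: "(real \<Rightarrow> real) set" where
  "G_dyad = {dyad_map d \<pi> | d \<pi>. \<pi> permutes {1..2 ^ d}}"

definition G_dyad_on :: "real set \<Rightarrow> (real \<Rightarrow> real) set" where
  "G_dyad_on E = {g \<in> G_dyad. \<forall>t \<in> {0<..1} - E. g t = t}"

definition F_dyad :: "nat \<Rightarrow> real set set" where
  "F_dyad N = sigma_sets {0<..1} {dyad_int N l | l. 1 \<le> l \<and> l \<le> 2 ^ N}"

definition is_subgroup_of :: "(real \<Rightarrow> real) set \<Rightarrow> (real \<Rightarrow> real) set \<Rightarrow> bool" where
  "is_subgroup_of H G \<longleftrightarrow> H \<subseteq> G \<and> id \<in> H \<and>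
     (\<forall>h1\<in>H. \<forall>h2\<in>H. h1 \<circ> h2 \<in> H) \<and> (\<forall>h\<in>H. inv h \<in> H)"

definition finite_locally_ergodic :: "(real \<Rightarrow> real) set \<Rightarrow> real set \<Rightarrow> bool" where
  "finite_locally_ergodic G E \<longleftrightarrow>
     E \<in> sets borel \<and> measure lborel E > 0 \<and>
     (\<exists>NE. E \<in> F_dyad NE \<and>
        (\<forall>N \<ge> NE. \<forall>l m. 1 \<le> l \<and> l \<le> 2 ^ N \<and> 1 \<le> m \<and> m \<le> 2 ^ N \<and> l \<noteq> m \<and>
            dyad_int N l \<union> dyad_int N m \<subseteq> E \<longrightarrow>
            (let A = dyad_int N l \<union> dyad_int N m in
             \<exists>H. is_subgroup_of H G \<and> (\<forall>h\<in>H. \<forall>t\<in>{0<..1} - A. h t = t) \<and>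
                 (\<forall>B \<in> sets borel. B \<subseteq> A \<longrightarrow>
                    (\<forall>h\<in>H. {t \<in> {0<..1}. h t \<in> B} = B) \<longrightarrow>
                    measure lborel B = 0 \<or> measure lborel B = measure lborel A))))"

definition locally_ergodic :: "(real \<Rightarrow> real) set \<Rightarrow> real set \<Rightarrow> bool" where
  "locally_ergodic G E \<longleftrightarrow>
     (\<exists>En :: nat \<Rightarrow> real set. incseq En \<and> (\<forall>n. finite_locally_ergodic G (En n)) \<and>
        E = (\<Union>n. En n))"

end

theory Submission
  imports Defs
begin

text \<open>
  The dyadic intervals contained in \<open>E\<close>, enumerated, exhaust \<open>E\<close> by an increasing sequence of
  finite unions of dyadic intervals, each of which lies in some \<open>F_dyad N\<close>. Let \<open>A\<close> be the union
  of two distinct level-\<open>N\<close> intervals inside \<open>E\<close>, and let \<open>B \<subseteq> A\<close> be a Borel set invariant under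
  \<open>G_dyad_on A\<close>. For \<open>n \<ge> N\<close>, the transposition of two level-\<open>n\<close> intervals inside \<open>A\<close> belongs to
  \<open>G_dyad_on A\<close> and translates one interval onto the other, so \<open>B\<close> meets all of them in sets of
  equal measure. Hence \<open>\<lambda>(B \<inter> X) = c \<lambda>(A \<inter> X)\<close> with \<open>c = \<lambda>(B) / \<lambda>(A)\<close> for every dyadic interval
  \<open>X\<close> of level at least \<open>N\<close>. These intervals form an intersection-stable generator of the Borel
  sets, so the identity holds for every Borel \<open>X\<close>; taking \<open>X = B\<close> gives \<open>\<lambda>(B) = c \<lambda>(B)\<close>, that
  is, \<open>\<lambda>(B) = 0\<close> or \<open>\<lambda>(B) = \<lambda>(A)\<close>.
\<close>

section \<open>Dyadic cells\<close>

lemma ceiling_divide_ceiling: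
  fixes y :: real
  assumes "0 < n"
  shows "\<lceil>y / of_int n\<rceil> = \<lceil>of_int \<lceil>y\<rceil> / of_int n\<rceil>"
proof -
  have "\<lceil>y / of_int n\<rceil> = - \<lfloor>(- y) / of_int n\<rfloor>"
    by (simp add: ceiling_def)
  also have "\<dots> = - (\<lfloor>- y\<rfloor> div n)"
    using floor_divide_real_eq_div[of n "- y"] assms by simp
  also have "\<dots> = \<lceil>of_int \<lceil>y\<rceil> / of_int n\<rceil>"
    unfolding ceiling_divide_eq_div by (simp add: ceiling_def)
  finally show ?thesis .
qed

definition dyadic_cell :: "nat \<Rightarrow> int \<Rightarrow> real set" where
  "dyadic_cell n k = {of_int k / 2 ^ n <.. of_int (k + 1) / 2 ^ n}"

lemma mem_dyadic_cell_iff: "x \<in> dyadic_cell n k \<longleftrightarrow> of_int k < x * 2 ^ n \<and> x * 2 ^ n \<le> of_int k + 1"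
  by (simp add: dyadic_cell_def field_simps)

lemma mem_dyadic_cell_iff_ceiling: "x \<in> dyadic_cell n k \<longleftrightarrow> \<lceil>x * 2 ^ n\<rceil> = k + 1"
  unfolding mem_dyadic_cell_iff ceiling_eq_iff by simp

lemma dyadic_cell_unique: "x \<in> dyadic_cell n k \<Longrightarrow> x \<in> dyadic_cell n k' \<Longrightarrow> k = k'"
  by (simp add: mem_dyadic_cell_iff_ceiling)

lemma dyadic_cells_disjoint: "k \<noteq> k' \<Longrightarrow> dyadic_cell n k \<inter> dyadic_cell n k' = {}"
  using dyadic_cell_unique by blast

lemma dyadic_cell_borel [measurable]: "dyadic_cell n k \<in> sets borel"
  by (simp add: dyadic_cell_def)

lemma bounded_dyadic_cell: "bounded (dyadic_cell n k)"
  by (simp add: dyadic_cell_def)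

lemma emeasure_dyadic_cell: "emeasure lborel (dyadic_cell n k) = ennreal (1 / 2 ^ n)"
  by (simp add: dyadic_cell_def field_simps)

lemma measure_dyadic_cell: "measure lborel (dyadic_cell n k) = 1 / 2 ^ n"
  by (simp add: measure_def emeasure_dyadic_cell)

lemma emeasure_Int_dyadic_cell_finite: "emeasure lborel (S \<inter> dyadic_cell n k) < \<infinity>"
  by (rule emeasure_bounded_finite) (meson bounded_dyadic_cell bounded_subset inf_le2)

lemma dyadic_cell_subset_unit_iff: "dyadic_cell n k \<subseteq> {0<..1} \<longleftrightarrow> 0 \<le> k \<and> k < 2 ^ n"
proof
  assume "dyadic_cell n k \<subseteq> {0<..1}"
  moreover have "of_int (k + 1) / 2 ^ n \<in> dyadic_cell n k"
    by (simp add: mem_dyadic_cell_iff)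
  ultimately have "0 < real_of_int (k + 1) / 2 ^ n" "real_of_int (k + 1) / 2 ^ n \<le> 1"
    by auto
  then have "0 < k + 1" "real_of_int (k + 1) \<le> real_of_int (2 ^ n)"
    by (simp_all add: zero_less_divide_iff divide_le_eq)
  then show "0 \<le> k \<and> k < 2 ^ n"
    by (simp only: of_int_le_iff) simp
next
  assume k: "0 \<le> k \<and> k < 2 ^ n"
  then have "real_of_int (k + 1) \<le> real_of_int (2 ^ n)"
    by (simp only: of_int_le_iff add1_zle_eq)
  with k have bounds: "0 \<le> real_of_int k" "real_of_int k + 1 \<le> 2 ^ n"
    by simp_all
  show "dyadic_cell n k \<subseteq> {0<..1}"
  proof
    fix x assume "x \<in> dyadic_cell n k"
    then have "real_of_int k < x * 2 ^ n" "x * 2 ^ n \<le> real_of_int k + 1"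
      by (simp_all add: mem_dyadic_cell_iff)
    with bounds have "0 < x * 2 ^ n" "x * 2 ^ n \<le> 1 * 2 ^ n"
      by linarith+
    then show "x \<in> {0<..1}"
      by (simp add: zero_less_mult_iff)
  qed
qed

lemma dyadic_cell_split:
  "dyadic_cell N a = (\<Union>i<(2::nat) ^ e. dyadic_cell (N + e) (a * 2 ^ e + int i))"
proof -
  have "x \<in> dyadic_cell N a \<longleftrightarrow> (\<exists>i<(2::nat) ^ e. x \<in> dyadic_cell (N + e) (a * 2 ^ e + int i))"
    for x
  proof -
    define c where "c = \<lceil>x * 2 ^ (N + e)\<rceil>"
    have "x * 2 ^ N = x * 2 ^ (N + e) / 2 ^ e"
      by (simp add: power_add)
    then have "\<lceil>x * 2 ^ N\<rceil> = \<lceil>of_int c / (2 ^ e :: real)\<rceil>"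
      using ceiling_divide_ceiling[of "2 ^ e" "x * 2 ^ (N + e)"] by (simp add: c_def)
    also have "\<dots> = a + 1 \<longleftrightarrow>
        real_of_int (a * 2 ^ e) < of_int c \<and> of_int c \<le> real_of_int (a * 2 ^ e + 2 ^ e)"
      by (simp add: ceiling_eq_iff field_simps)
    finally have "x \<in> dyadic_cell N a \<longleftrightarrow> a * 2 ^ e < c \<and> c \<le> a * 2 ^ e + 2 ^ e"
      by (simp only: mem_dyadic_cell_iff_ceiling of_int_less_iff of_int_le_iff)
    also have "\<dots> \<longleftrightarrow> (\<exists>i<(2::nat) ^ e. c = a * 2 ^ e + int i + 1)"
    proof
      assume "a * 2 ^ e < c \<and> c \<le> a * 2 ^ e + 2 ^ e"
      then show "\<exists>i<(2::nat) ^ e. c = a * 2 ^ e + int i + 1"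
        by (intro exI[of _ "nat (c - 1 - a * 2 ^ e)"]) (auto simp: nat_less_iff)
    next
      assume "\<exists>i<(2::nat) ^ e. c = a * 2 ^ e + int i + 1"
      then obtain i where "i < 2 ^ e" "c = a * 2 ^ e + int i + 1"
        by blast
      then show "a * 2 ^ e < c \<and> c \<le> a * 2 ^ e + 2 ^ e"
        by (simp add: add1_zle_eq)
    qed
    finally show ?thesis
      by (simp add: mem_dyadic_cell_iff_ceiling c_def add.commute)
  qed
  then show ?thesis
    by blast
qed

lemma dyadic_cells_nested:
  assumes "n \<le> n'"
  shows "dyadic_cell n k \<inter> dyadic_cell n' k' = {} \<or> dyadic_cell n' k' \<subseteq> dyadic_cell n k"
proof -
  obtain e where n': "n' = n + e"
    using assms le_Suc_ex by blast
  have "dyadic_cell n' k' \<subseteq> dyadic_cell n k"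
    if x: "x \<in> dyadic_cell n k" "x \<in> dyadic_cell n' k'" for x
  proof -
    from x(1) obtain i where i: "i < 2 ^ e" "x \<in> dyadic_cell n' (k * 2 ^ e + int i)"
      using dyadic_cell_split[of n k e] unfolding n' by blast
    then have "k' = k * 2 ^ e + int i"
      using dyadic_cell_unique[OF x(2)] by blast
    then show ?thesis
      using i(1) dyadic_cell_split[of n k e] unfolding n' by blast
  qed
  then show ?thesis
    by blast
qed

text \<open>Unlike the intervals \<open>dyad_int n k\<close>, the cells of a level cover the whole real line, so
  that the fine cells generate the Borel sets.\<close>

definition fine_dyadic_cells :: "nat \<Rightarrow> real set set" where
  "fine_dyadic_cells N = insert {} {dyadic_cell n k | n k. N \<le> n}"

lemma Int_stable_fine_dyadic_cells: "Int_stable (fine_dyadic_cells N)"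
proof (rule Int_stableI)
  fix X Y assume "X \<in> fine_dyadic_cells N" "Y \<in> fine_dyadic_cells N"
  then consider "X = {} \<or> Y = {}"
    | n k n' k' where "X = dyadic_cell n k" "Y = dyadic_cell n' k'" "N \<le> n" "N \<le> n'"
    unfolding fine_dyadic_cells_def by blast
  then show "X \<inter> Y \<in> fine_dyadic_cells N"
  proof cases
    case 2
    then have "X \<inter> Y = {} \<or> X \<inter> Y = X \<or> X \<inter> Y = Y"
      using dyadic_cells_nested[of n n' k k'] dyadic_cells_nested[of n' n k' k]
      by (cases "n \<le> n'") auto
    then show ?thesis
      using 2 unfolding fine_dyadic_cells_def by blast
  qed (auto simp: fine_dyadic_cells_def)
qed

lemma fine_dyadic_cells_borel: "fine_dyadic_cells N \<subseteq> sets borel"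
  unfolding fine_dyadic_cells_def by auto

lemma lessThan_eq_Union_dyadic_cells:
  fixes a :: real
  shows "{..<a} = \<Union>{dyadic_cell n k | n k. N \<le> n \<and> of_int (k + 1) / 2 ^ n < a}"
proof (intro set_eqI iffI)
  fix x assume "x \<in> {..<a}"
  then obtain n0 where n0: "(1 / 2 :: real) ^ n0 < a - x"
    using real_arch_pow_inv[of "a - x" "1 / 2"] by auto
  define n where "n = n0 + N"
  have "(1 / 2 :: real) ^ n \<le> (1 / 2) ^ n0"
    unfolding n_def by (rule power_decreasing) auto
  with n0 have small: "1 / 2 ^ n < a - x"
    by (simp add: power_one_over)
  define k where "k = \<lceil>x * 2 ^ n\<rceil> - 1"
  have x: "x \<in> dyadic_cell n k"
    by (simp add: mem_dyadic_cell_iff_ceiling k_def)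
  then have "of_int (k + 1) / 2 ^ n \<le> x + 1 / 2 ^ n"
    by (simp add: mem_dyadic_cell_iff field_simps)
  with small have "of_int (k + 1) / 2 ^ n < a"
    by linarith
  moreover have "N \<le> n"
    by (simp add: n_def)
  ultimately have "dyadic_cell n k \<in> {dyadic_cell n k | n k. N \<le> n \<and> of_int (k + 1) / 2 ^ n < a}"
    by blast
  with x show "x \<in> \<Union>{dyadic_cell n k | n k. N \<le> n \<and> of_int (k + 1) / 2 ^ n < a}"
    by (rule UnionI[rotated])
next
  fix x assume "x \<in> \<Union>{dyadic_cell n k | n k. N \<le> n \<and> of_int (k + 1) / 2 ^ n < a}"
  then obtain n k where "x \<in> dyadic_cell n k" "of_int (k + 1) / 2 ^ n < a"
    by blast
  then show "x \<in> {..<a}"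
    by (auto simp: dyadic_cell_def)
qed

lemma sets_borel_eq_sigma_fine_dyadic_cells: "sets borel = sigma_sets UNIV (fine_dyadic_cells N)"
proof
  interpret S: sigma_algebra UNIV "sigma_sets UNIV (fine_dyadic_cells N)"
    by (rule sigma_algebra_sigma_sets) simp
  have "{..<a} \<in> sigma_sets UNIV (fine_dyadic_cells N)" for a :: real
  proof -
    let ?F = "{dyadic_cell n k | n k. N \<le> n \<and> of_int (k + 1) / 2 ^ n < a}"
    have "?F \<subseteq> range (case_prod dyadic_cell)"
      by (force simp: image_iff)
    then have "countable ?F"
      by (rule countable_subset) simp
    moreover have "?F \<subseteq> sigma_sets UNIV (fine_dyadic_cells N)"
    proof
      fix X assume "X \<in> ?F"
      then have "X \<in> fine_dyadic_cells N"
        unfolding fine_dyadic_cells_def by blast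
      then show "X \<in> sigma_sets UNIV (fine_dyadic_cells N)"
        by (rule sigma_sets.Basic)
    qed
    ultimately have "\<Union>?F \<in> sigma_sets UNIV (fine_dyadic_cells N)"
      by (rule S.countable_Union)
    then show ?thesis
      using lessThan_eq_Union_dyadic_cells[of a N] by simp
  qed
  then have "sigma_sets UNIV (range lessThan) \<subseteq> sigma_sets UNIV (fine_dyadic_cells N)"
    by (intro S.sigma_sets_subset) blast
  then show "sets borel \<subseteq> sigma_sets UNIV (fine_dyadic_cells N)"
    by (simp add: borel_Iio)
  show "sigma_sets UNIV (fine_dyadic_cells N) \<subseteq> sets borel"
    using sets.sigma_sets_subset[of "fine_dyadic_cells N" borel] fine_dyadic_cells_borel by simp
qed

definition dyad_index :: "nat \<Rightarrow> real \<Rightarrow> nat" where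
  "dyad_index d t = nat \<lceil>t * 2 ^ d\<rceil>"

lemma mem_dyad_int_iff: "t \<in> dyad_int d k \<longleftrightarrow> real k - 1 < t * 2 ^ d \<and> t * 2 ^ d \<le> real k"
  by (simp add: dyad_int_def field_simps)

lemma mem_dyad_int_iff_ceiling: "1 \<le> k \<Longrightarrow> t \<in> dyad_int d k \<longleftrightarrow> \<lceil>t * 2 ^ d\<rceil> = int k"
  unfolding mem_dyad_int_iff ceiling_eq_iff by simp

lemma dyad_index_unique: "1 \<le> k \<Longrightarrow> t \<in> dyad_int d k \<Longrightarrow> dyad_index d t = k"
  by (simp add: dyad_index_def mem_dyad_int_iff_ceiling)

lemma dyad_int_eq_dyadic_cell: "dyad_int n j = dyadic_cell n (int j - 1)"
  by (auto simp: dyad_int_def dyadic_cell_def)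

lemma dyad_int_subset_unit:
  assumes "1 \<le> k" "k \<le> 2 ^ d"
  shows "dyad_int d k \<subseteq> {0<..1}"
proof -
  have "int k \<le> 2 ^ d"
    using assms(2) by (metis of_nat_le_iff of_nat_numeral of_nat_power)
  with assms(1) show ?thesis
    unfolding dyad_int_eq_dyadic_cell dyadic_cell_subset_unit_iff by linarith
qed

lemma dyad_index_bounds:
  assumes "t \<in> {0<..1}"
  shows "1 \<le> dyad_index d t" "dyad_index d t \<le> 2 ^ d" "t \<in> dyad_int d (dyad_index d t)"
proof -
  have "0 < t * 2 ^ d" "t * 2 ^ d \<le> 2 ^ d"
    using assms by auto
  then have c: "0 < \<lceil>t * 2 ^ d\<rceil>" "\<lceil>t * 2 ^ d\<rceil> \<le> 2 ^ d"
    by (simp_all add: ceiling_le_iff)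
  then show "1 \<le> dyad_index d t" "dyad_index d t \<le> 2 ^ d"
    by (simp_all add: dyad_index_def le_nat_iff nat_le_iff)
  with c show "t \<in> dyad_int d (dyad_index d t)"
    by (simp add: mem_dyad_int_iff_ceiling dyad_index_def)
qed

lemma dyad_map_eq:
  assumes "t \<in> {0<..1}"
  shows "dyad_map d \<pi> t = t + (real (\<pi> (dyad_index d t)) - real (dyad_index d t)) / 2 ^ d"
proof -
  have index: "(THE k. 1 \<le> k \<and> k \<le> 2 ^ d \<and> t \<in> dyad_int d k) = dyad_index d t"
    using dyad_index_bounds[OF assms] dyad_index_unique by (intro the_equality) auto
  show ?thesis
    unfolding dyad_map_def if_P[OF assms] index Let_def by (simp add: field_simps)
qed

lemma dyad_map_outside: "t \<notin> {0<..1} \<Longrightarrow> dyad_map d \<pi> t = t"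
  unfolding dyad_map_def by (simp only: if_False)

lemma dyad_map_cell:
  assumes "\<pi> permutes {1..2^d}" "t \<in> {0<..1}"
  shows "dyad_map d \<pi> t \<in> dyad_int d (\<pi> (dyad_index d t))"
proof -
  let ?k = "dyad_index d t"
  have "dyad_map d \<pi> t * 2 ^ d = t * 2 ^ d + real (\<pi> ?k) - real ?k"
    by (simp add: dyad_map_eq[OF assms(2)] field_simps)
  then show ?thesis
    using dyad_index_bounds(3)[OF assms(2), of d] by (simp add: mem_dyad_int_iff)
qed

lemma
  assumes "\<pi> permutes {1..2^d}" "t \<in> {0<..1}"
  shows dyad_map_in_unit: "dyad_map d \<pi> t \<in> {0<..1}"
    and dyad_index_dyad_map: "dyad_index d (dyad_map d \<pi> t) = \<pi> (dyad_index d t)"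
proof -
  have "\<pi> (dyad_index d t) \<in> {1..2^d}"
    using permutes_in_image[OF assms(1)] dyad_index_bounds[OF assms(2)] by auto
  then have k: "1 \<le> \<pi> (dyad_index d t)" "\<pi> (dyad_index d t) \<le> 2 ^ d"
    by auto
  show "dyad_map d \<pi> t \<in> {0<..1}"
    using dyad_int_subset_unit[OF k] dyad_map_cell[OF assms] by blast
  show "dyad_index d (dyad_map d \<pi> t) = \<pi> (dyad_index d t)"
    using dyad_index_unique[OF k(1) dyad_map_cell[OF assms]] .
qed

lemma dyad_map_comp:
  assumes "\<sigma> permutes {1..2^d}"
  shows "dyad_map d \<pi> \<circ> dyad_map d \<sigma> = dyad_map d (\<pi> \<circ> \<sigma>)"
proof
  fix t
  show "(dyad_map d \<pi> \<circ> dyad_map d \<sigma>) t = dyad_map d (\<pi> \<circ> \<sigma>) t"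
  proof (cases "t \<in> {0<..1}")
    case True
    let ?k = "dyad_index d t"
    have "dyad_map d \<pi> (dyad_map d \<sigma> t)
        = dyad_map d \<sigma> t + (real (\<pi> (\<sigma> ?k)) - real (\<sigma> ?k)) / 2 ^ d"
      using dyad_map_eq[OF dyad_map_in_unit[OF assms True]] dyad_index_dyad_map[OF assms True]
      by simp
    moreover have "dyad_map d (\<pi> \<circ> \<sigma>) t = t + (real (\<pi> (\<sigma> ?k)) - real ?k) / 2 ^ d"
      by (simp add: dyad_map_eq[OF True])
    ultimately show ?thesis
      by (simp only: o_apply) (simp add: dyad_map_eq[OF True] field_simps)
  qed (simp add: dyad_map_outside)
qed

lemma dyad_map_id: "dyad_map d id = id"
proof
  fix t show "dyad_map d id t = id t"
    by (cases "t \<in> {0<..1}") (simp_all add: dyad_map_eq dyad_map_outside)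
qed

lemma
  assumes "\<pi> permutes {1..2^d}"
  shows dyad_map_comp_inv: "dyad_map d \<pi> \<circ> dyad_map d (inv \<pi>) = id"
    and dyad_map_inv_comp: "dyad_map d (inv \<pi>) \<circ> dyad_map d \<pi> = id"
  using dyad_map_comp[OF permutes_inv[OF assms], of \<pi>] dyad_map_comp[OF assms, of "inv \<pi>"]
  by (simp_all add: permutes_inv_o[OF assms] dyad_map_id)

lemma inv_dyad_map:
  "\<pi> permutes {1..2^d} \<Longrightarrow> inv (dyad_map d \<pi>) = dyad_map d (inv \<pi>)"
  by (rule inv_unique_comp[OF dyad_map_comp_inv dyad_map_inv_comp])

lemma inj_dyad_map: "\<pi> permutes {1..2^d} \<Longrightarrow> inj (dyad_map d \<pi>)"
  by (metis dyad_map_inv_comp inj_on_id inj_on_imageI2)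

section \<open>Closure of \<open>G_dyad\<close> under composition\<close>

text \<open>Maps of different levels are composed by regarding both as translations of the cells of a
  common finer level \<open>D\<close>.\<close>

definition dyad_level_translation :: "nat \<Rightarrow> (real \<Rightarrow> real) \<Rightarrow> bool" where
  "dyad_level_translation D g \<longleftrightarrow>
     (\<exists>m::nat \<Rightarrow> int. \<forall>t\<in>{0<..1}. g t = t + of_int (m (dyad_index D t)) / 2 ^ D)"

lemma right_endpoint_dyad_int: "real k / 2 ^ D \<in> dyad_int D k"
  by (simp add: mem_dyad_int_iff)

lemma
  assumes "k \<in> {1..2^D}"
  shows right_endpoint_in_unit: "real k / 2 ^ D \<in> {0<..1}"
    and dyad_index_right_endpoint: "dyad_index D (real k / 2 ^ D) = k"
    and dyad_map_right_endpoint: "dyad_map D \<pi> (real k / 2 ^ D) = real (\<pi> k) / 2 ^ D"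
proof -
  have k: "1 \<le> k" "k \<le> 2 ^ D"
    using assms by auto
  show unit: "real k / 2 ^ D \<in> {0<..1}"
    using dyad_int_subset_unit[OF k] right_endpoint_dyad_int by blast
  show index: "dyad_index D (real k / 2 ^ D) = k"
    using k(1) right_endpoint_dyad_int by (rule dyad_index_unique)
  show "dyad_map D \<pi> (real k / 2 ^ D) = real (\<pi> k) / 2 ^ D"
    by (simp add: dyad_map_eq[OF unit] index diff_divide_distrib)
qed

lemma dyad_level_translation_eq_dyad_map:
  assumes "dyad_level_translation D g" and into: "g ` {0<..1} \<subseteq> {0<..1}"
  obtains \<pi> where "\<pi> ` {1..2^D} \<subseteq> {1..2^D}" "\<And>k. k \<notin> {1..2^D} \<Longrightarrow> \<pi> k = k"
    "\<And>t. t \<in> {0<..1} \<Longrightarrow> g t = dyad_map D \<pi> t"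
proof -
  obtain m where m: "\<And>t. t \<in> {0<..1} \<Longrightarrow> g t = t + of_int (m (dyad_index D t)) / 2 ^ D"
    using assms(1) unfolding dyad_level_translation_def by blast
  define \<pi> where "\<pi> k = (if k \<in> {1..2^D} then nat (int k + m k) else k)" for k
  have \<pi>: "\<pi> k \<in> {1..2^D}" "real (\<pi> k) = real k + of_int (m k)" if k: "k \<in> {1..2^D}" for k
  proof -
    have "g (real k / 2 ^ D) = (real k + of_int (m k)) / 2 ^ D"
      using m[OF right_endpoint_in_unit[OF k]]
      by (simp add: dyad_index_right_endpoint[OF k] add_divide_distrib)
    moreover have "g (real k / 2 ^ D) \<in> {0<..1}"
      using into right_endpoint_in_unit[OF k] by blast
    ultimately have "0 < real k + of_int (m k)" "real k + of_int (m k) \<le> 2 ^ D"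
      by (auto simp: divide_le_eq zero_less_divide_iff)
    moreover have "real_of_int (int k + m k) = real k + of_int (m k)" "real_of_int (2 ^ D) = 2 ^ D"
      by simp_all
    ultimately have "0 < int k + m k" "int k + m k \<le> 2 ^ D"
      by (metis of_int_0_less_iff, metis of_int_le_iff)
    then show "\<pi> k \<in> {1..2^D}" "real (\<pi> k) = real k + of_int (m k)"
      using k by (auto simp: \<pi>_def nat_le_iff)
  qed
  show thesis
  proof (rule that)
    show "\<pi> ` {1..2^D} \<subseteq> {1..2^D}"
      using \<pi>(1) by blast
    show "\<pi> k = k" if "k \<notin> {1..2^D}" for k
      unfolding \<pi>_def using that by (rule if_not_P)
    show "g t = dyad_map D \<pi> t" if t: "t \<in> {0<..1}" for t
      using m[OF t] \<pi>(2) dyad_index_bounds[OF t] by (simp add: dyad_map_eq[OF t])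
  qed
qed

lemma G_dyadI:
  assumes "dyad_level_translation D g" "g ` {0<..1} \<subseteq> {0<..1}"
    and inj: "inj_on g {0<..1}" and fix_outside: "\<And>t. t \<notin> {0<..1} \<Longrightarrow> g t = t"
  shows "g \<in> G_dyad"
proof -
  obtain \<pi> where \<pi>: "\<pi> ` {1..2^D} \<subseteq> {1..2^D}" "\<And>k. k \<notin> {1..2^D} \<Longrightarrow> \<pi> k = k"
    and g_on_unit: "\<And>t. t \<in> {0<..1} \<Longrightarrow> g t = dyad_map D \<pi> t"
    using dyad_level_translation_eq_dyad_map[OF assms(1,2)] by blast
  have g: "g = dyad_map D \<pi>"
  proof
    fix t show "g t = dyad_map D \<pi> t"
      by (cases "t \<in> {0<..1}") (simp_all add: g_on_unit fix_outside dyad_map_outside)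
  qed
  have "inj_on \<pi> {1..2^D}"
  proof (rule inj_onI)
    fix a b assume ab: "a \<in> {1..2^D}" "b \<in> {1..2^D}" "\<pi> a = \<pi> b"
    then have "g (real a / 2 ^ D) = g (real b / 2 ^ D)"
      by (simp add: g dyad_map_right_endpoint)
    then have "real a / 2 ^ D = real b / 2 ^ D"
      using inj right_endpoint_in_unit ab(1,2) by (meson inj_onD)
    then show "a = b"
      by simp
  qed
  with \<pi>(1) have "bij_betw \<pi> {1..2^D} {1..2^D}"
    by (simp add: bij_betw_def endo_inj_surj)
  then have "\<pi> permutes {1..2^D}"
    using \<pi>(2) by (rule bij_imp_permutes)
  then show ?thesis
    unfolding G_dyad_def g by blast
qed

lemma dyad_index_coarser:
  assumes "t \<in> {0<..1}" "d \<le> D"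
  shows "dyad_index d t = nat \<lceil>real (dyad_index D t) / 2 ^ (D - d)\<rceil>"
proof -
  have "t * 2 ^ d = t * 2 ^ D / 2 ^ (D - d)"
    using assms(2) by (simp add: power_diff)
  then have "\<lceil>t * 2 ^ d\<rceil> = \<lceil>of_int \<lceil>t * 2 ^ D\<rceil> / (2 ^ (D - d) :: real)\<rceil>"
    using ceiling_divide_ceiling[of "2 ^ (D - d)" "t * 2 ^ D"] by simp
  moreover have "real (dyad_index D t) = of_int \<lceil>t * 2 ^ D\<rceil>"
    using assms(1) by (simp add: dyad_index_def)
  ultimately show ?thesis
    by (simp add: dyad_index_def)
qed

lemma dyad_level_translation_dyad_map:
  assumes "d \<le> D"
  shows "dyad_level_translation D (dyad_map d \<pi>)"
proof -
  define up where "up K = nat \<lceil>real K / 2 ^ (D - d)\<rceil>" for K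
  define m where "m K = (int (\<pi> (up K)) - int (up K)) * 2 ^ (D - d)" for K
  have "dyad_map d \<pi> t = t + of_int (m (dyad_index D t)) / 2 ^ D" if t: "t \<in> {0<..1}" for t
  proof -
    have "(2::real) ^ D = 2 ^ d * 2 ^ (D - d)"
      using assms by (simp flip: power_add)
    then show ?thesis
      unfolding dyad_map_eq[OF t] m_def up_def dyad_index_coarser[OF t assms, symmetric] by simp
  qed
  then show ?thesis
    unfolding dyad_level_translation_def by blast
qed

lemma dyad_level_translation_comp:
  assumes "dyad_level_translation D g1" "dyad_level_translation D g2"
    and "g2 ` {0<..1} \<subseteq> {0<..1}"
  shows "dyad_level_translation D (g1 \<circ> g2)"
proof -
  obtain m1 where m1: "\<And>t. t \<in> {0<..1} \<Longrightarrow> g1 t = t + of_int (m1 (dyad_index D t)) / 2 ^ D"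
    using assms(1) unfolding dyad_level_translation_def by blast
  obtain m2 where m2: "\<And>t. t \<in> {0<..1} \<Longrightarrow> g2 t = t + of_int (m2 (dyad_index D t)) / 2 ^ D"
    using assms(2) unfolding dyad_level_translation_def by blast
  define m where "m k = m2 k + m1 (nat (int k + m2 k))" for k
  have "(g1 \<circ> g2) t = t + of_int (m (dyad_index D t)) / 2 ^ D" if t: "t \<in> {0<..1}" for t
  proof -
    let ?k = "dyad_index D t"
    have g2t: "g2 t \<in> {0<..1}"
      using t assms(3) by blast
    have "\<lceil>g2 t * 2 ^ D\<rceil> = \<lceil>t * 2 ^ D\<rceil> + m2 ?k"
      by (simp add: m2[OF t] distrib_right)
    moreover have "0 < t * 2 ^ D"
      using t by simp
    then have "int ?k = \<lceil>t * 2 ^ D\<rceil>"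
      by (simp add: dyad_index_def)
    ultimately have index: "dyad_index D (g2 t) = nat (int ?k + m2 ?k)"
      by (simp add: dyad_index_def)
    show ?thesis
      unfolding o_apply m1[OF g2t] index by (simp add: m2[OF t] m_def field_simps)
  qed
  then show ?thesis
    unfolding dyad_level_translation_def by blast
qed

lemma G_dyadE:
  assumes "g \<in> G_dyad"
  obtains d \<pi> where "\<pi> permutes {1..2^d}" "g = dyad_map d \<pi>"
  using assms unfolding G_dyad_def by blast

lemma id_in_G_dyad: "id \<in> G_dyad"
proof -
  have "dyad_map 0 id \<in> G_dyad"
    unfolding G_dyad_def using permutes_id by blast
  then show ?thesis
    by (simp only: dyad_map_id)
qed

lemma inv_in_G_dyad:
  assumes "g \<in> G_dyad"
  shows "inv g \<in> G_dyad"
proof -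
  obtain d \<pi> where "\<pi> permutes {1..2^d}" "g = dyad_map d \<pi>"
    using assms by (rule G_dyadE)
  then show ?thesis
    unfolding G_dyad_def using inv_dyad_map permutes_inv by blast
qed

lemma G_dyad_comp:
  assumes "g1 \<in> G_dyad" "g2 \<in> G_dyad"
  shows "g1 \<circ> g2 \<in> G_dyad"
proof -
  obtain d1 \<pi>1 where p1: "\<pi>1 permutes {1..2^d1}" "g1 = dyad_map d1 \<pi>1"
    using assms(1) by (rule G_dyadE)
  obtain d2 \<pi>2 where p2: "\<pi>2 permutes {1..2^d2}" "g2 = dyad_map d2 \<pi>2"
    using assms(2) by (rule G_dyadE)
  have into: "g1 ` {0<..1} \<subseteq> {0<..1}" "g2 ` {0<..1} \<subseteq> {0<..1}"
    using p1 p2 dyad_map_in_unit by auto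
  show ?thesis
  proof (rule G_dyadI)
    have "dyad_level_translation (max d1 d2) g1" "dyad_level_translation (max d1 d2) g2"
      unfolding p1(2) p2(2) by (simp_all add: dyad_level_translation_dyad_map)
    then show "dyad_level_translation (max d1 d2) (g1 \<circ> g2)"
      using into(2) by (rule dyad_level_translation_comp)
    show "(g1 \<circ> g2) ` {0<..1} \<subseteq> {0<..1}"
      using into by auto
    have "inj (g1 \<circ> g2)"
      unfolding p1(2) p2(2) using p1(1) p2(1) by (intro inj_compose inj_dyad_map)
    then show "inj_on (g1 \<circ> g2) {0<..1}"
      by (rule inj_on_subset) simp
    show "(g1 \<circ> g2) t = t" if "t \<notin> {0<..1}" for t
      using p1(2) p2(2) that by (simp add: dyad_map_outside)
  qed
qed

lemma G_dyad_on_subgroup: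
  assumes "A \<subseteq> E"
  shows "is_subgroup_of (G_dyad_on A) (G_dyad_on E)"
  unfolding is_subgroup_of_def
proof (intro conjI ballI)
  show "G_dyad_on A \<subseteq> G_dyad_on E"
    using assms unfolding G_dyad_on_def by auto
  show "id \<in> G_dyad_on A"
    using id_in_G_dyad unfolding G_dyad_on_def by simp
  show "h1 \<circ> h2 \<in> G_dyad_on A" if "h1 \<in> G_dyad_on A" "h2 \<in> G_dyad_on A" for h1 h2
    using that G_dyad_comp unfolding G_dyad_on_def by auto
  show "inv h \<in> G_dyad_on A" if h: "h \<in> G_dyad_on A" for h
  proof -
    have hG: "h \<in> G_dyad"
      using h by (simp add: G_dyad_on_def)
    then have "inj h"
      by (metis G_dyadE inj_dyad_map)
    then have "inv h t = t" if "t \<in> {0<..1} - A" for t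
      using h that unfolding G_dyad_on_def by (metis (mono_tags, lifting) inv_f_f mem_Collect_eq)
    then show ?thesis
      using inv_in_G_dyad[OF hG] unfolding G_dyad_on_def by simp
  qed
qed

section \<open>Sets invariant under \<open>G_dyad_on A\<close>\<close>

lemma measure_lborel_translate:
  fixes \<delta> :: real
  assumes "S \<in> sets borel"
  shows "measure lborel {t. \<delta> + t \<in> S} = measure lborel S"
proof -
  have "measure lborel S = measure (distr lborel borel ((+) \<delta>)) S"
    by (simp add: lborel_distr_plus)
  also have "\<dots> = measure lborel ((+) \<delta> -` S \<inter> space lborel)"
    by (rule measure_distr) (simp_all add: assms)
  finally show ?thesis
    by (simp add: vimage_def)
qed

lemma dyad_map_transpose_translates:
  assumes "p \<in> {1..2^n}" "t \<in> dyad_int n p"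
  shows "dyad_map n (Transposition.transpose p q) t = t + (real q - real p) / 2 ^ n"
proof -
  have p: "1 \<le> p" "p \<le> 2 ^ n"
    using assms(1) by auto
  have "t \<in> {0<..1}"
    using dyad_int_subset_unit[OF p] assms(2) by blast
  moreover have "dyad_index n t = p"
    by (rule dyad_index_unique[OF p(1) assms(2)])
  ultimately show ?thesis
    by (simp add: dyad_map_eq)
qed

lemma dyad_map_transpose_in_G_dyad_on:
  assumes "p \<in> {1..2^n}" "q \<in> {1..2^n}" "dyad_int n p \<union> dyad_int n q \<subseteq> A"
  shows "dyad_map n (Transposition.transpose p q) \<in> G_dyad_on A"
  unfolding G_dyad_on_def G_dyad_def
proof (intro CollectI conjI ballI exI)
  show "Transposition.transpose p q permutes {1..2^n}"
    using assms(1,2) by (rule permutes_swap_id)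
  fix t assume t: "t \<in> {0<..1} - A"
  then have "dyad_index n t \<noteq> p" "dyad_index n t \<noteq> q"
    using dyad_index_bounds(3)[of t n] assms(3) by auto
  then show "dyad_map n (Transposition.transpose p q) t = t"
    using t by (simp add: dyad_map_eq)
qed simp

lemma invariant_set_measure_translate:
  fixes B X Y :: "real set"
  assumes B: "B \<in> sets borel" "{t \<in> {0<..1}. h t \<in> B} = B" and Y: "Y \<in> sets borel"
    and X: "X \<subseteq> {0<..1}" and shift: "\<And>t. t \<in> X \<Longrightarrow> h t = \<delta> + t"
    and XY: "\<And>t. \<delta> + t \<in> Y \<longleftrightarrow> t \<in> X"
  shows "measure lborel (B \<inter> X) = measure lborel (B \<inter> Y)"
proof -
  have "B \<inter> X = {t. \<delta> + t \<in> B \<inter> Y}"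
  proof (intro set_eqI iffI)
    fix t assume t: "t \<in> B \<inter> X"
    then have "h t \<in> B"
      using B(2) by blast
    then show "t \<in> {t. \<delta> + t \<in> B \<inter> Y}"
      using t shift XY by simp
  next
    fix t assume t: "t \<in> {t. \<delta> + t \<in> B \<inter> Y}"
    then have "t \<in> X"
      using XY by blast
    moreover have "h t \<in> B"
      using t shift[OF \<open>t \<in> X\<close>] by simp
    ultimately show "t \<in> B \<inter> X"
      using B(2) X by blast
  qed
  then show ?thesis
    using measure_lborel_translate[of "B \<inter> Y" \<delta>] B(1) Y by simp
qed

text \<open>The transposition of two level-\<open>n\<close> cells inside \<open>A\<close> lies in \<open>G_dyad_on A\<close> and translates
  the first cell onto the second.\<close>

lemma invariant_set_measure_cells_eq:
  fixes A B :: "real set"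
  assumes A: "A \<subseteq> {0<..1}" and cells: "dyadic_cell n j \<subseteq> A" "dyadic_cell n j' \<subseteq> A"
    and B: "B \<in> sets borel" and inv: "\<forall>h\<in>G_dyad_on A. {t \<in> {0<..1}. h t \<in> B} = B"
  shows "measure lborel (B \<inter> dyadic_cell n j) = measure lborel (B \<inter> dyadic_cell n j')"
proof -
  have j: "0 \<le> j" "j < 2 ^ n" "0 \<le> j'" "j' < 2 ^ n"
    using cells A by (meson dyadic_cell_subset_unit_iff order.trans)+
  define p q where "p = Suc (nat j)" and "q = Suc (nat j')"
  have pq: "p \<in> {1..2^n}" "q \<in> {1..2^n}"
    using j by (auto simp: p_def q_def Suc_le_eq nat_less_iff)
  have cells_pq: "dyad_int n p = dyadic_cell n j" "dyad_int n q = dyadic_cell n j'"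
    using j by (simp_all add: p_def q_def dyad_int_eq_dyadic_cell)
  define h where "h = dyad_map n (Transposition.transpose p q)"
  have "h \<in> G_dyad_on A"
    unfolding h_def using pq cells cells_pq by (intro dyad_map_transpose_in_G_dyad_on) auto
  show ?thesis
  proof (rule invariant_set_measure_translate[where h = h and \<delta> = "real_of_int (j' - j) / 2 ^ n"])
    show "{t \<in> {0<..1}. h t \<in> B} = B"
      using inv \<open>h \<in> G_dyad_on A\<close> by blast
    show "h t = real_of_int (j' - j) / 2 ^ n + t" if "t \<in> dyadic_cell n j" for t
      using dyad_map_transpose_translates[OF pq(1), of t q] that j cells_pq
      by (simp add: h_def p_def q_def field_simps)
    have "(real_of_int (j' - j) / 2 ^ n + t) * 2 ^ n = real_of_int j' - real_of_int j + t * 2 ^ n"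
      for t :: real
      by (simp add: field_simps)
    then show "real_of_int (j' - j) / 2 ^ n + t \<in> dyadic_cell n j' \<longleftrightarrow> t \<in> dyadic_cell n j"
      for t
      by (auto simp: mem_dyadic_cell_iff)
    show "dyadic_cell n j \<subseteq> {0<..1}"
      using cells(1) A by (rule order.trans)
  qed (simp_all add: B)
qed

lemma measure_Int_dyadic_cell_uniform:
  assumes B: "B \<in> sets borel"
    and \<beta>: "\<And>i. i < (2::nat) ^ e \<Longrightarrow> measure lborel (B \<inter> dyadic_cell (N + e) (a * 2 ^ e + int i)) = \<beta>"
  shows "measure lborel (B \<inter> dyadic_cell N a) = 2 ^ e * \<beta>"
proof -
  have "B \<inter> dyadic_cell N a = (\<Union>i<(2::nat) ^ e. B \<inter> dyadic_cell (N + e) (a * 2 ^ e + int i))"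
    using dyadic_cell_split[of N a e] by blast
  also have "measure lborel \<dots>
      = (\<Sum>i<(2::nat) ^ e. measure lborel (B \<inter> dyadic_cell (N + e) (a * 2 ^ e + int i)))"
  proof (rule measure_finite_Union)
    show "disjoint_family_on (\<lambda>i. B \<inter> dyadic_cell (N + e) (a * 2 ^ e + int i)) {..<2 ^ e}"
      unfolding disjoint_family_on_def
    proof (intro ballI impI)
      fix i i' :: nat assume "i \<noteq> i'"
      then have "a * 2 ^ e + int i \<noteq> a * 2 ^ e + int i'"
        by simp
      then show "B \<inter> dyadic_cell (N + e) (a * 2 ^ e + int i)
          \<inter> (B \<inter> dyadic_cell (N + e) (a * 2 ^ e + int i')) = {}"
        using dyadic_cells_disjoint by blast
    qed
    show "emeasure lborel (B \<inter> dyadic_cell (N + e) (a * 2 ^ e + int i)) \<noteq> \<infinity>" for i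
      using emeasure_Int_dyadic_cell_finite by (simp add: less_top)
  qed (use B in auto)
  also have "\<dots> = 2 ^ e * \<beta>"
    using \<beta> by simp
  finally show ?thesis .
qed

lemma measure_two_dyadic_cells:
  assumes "a \<noteq> b"
  shows "measure lborel (dyadic_cell N a \<union> dyadic_cell N b) = 2 / 2 ^ N"
proof -
  have "measure lborel (dyadic_cell N a \<union> dyadic_cell N b)
      = measure lborel (dyadic_cell N a) + measure lborel (dyadic_cell N b)"
    using assms dyadic_cells_disjoint by (intro measure_Union) (auto simp: emeasure_dyadic_cell)
  then show ?thesis
    by (simp add: measure_dyadic_cell)
qed

lemma invariant_set_measure_fine_cell:
  fixes A B :: "real set"
  assumes ab: "a \<noteq> b" and A: "A = dyadic_cell N a \<union> dyadic_cell N b" "A \<subseteq> {0<..1}"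
    and B: "B \<in> sets borel" "B \<subseteq> A" and inv: "\<forall>h\<in>G_dyad_on A. {t \<in> {0<..1}. h t \<in> B} = B"
    and cell: "N \<le> n" "dyadic_cell n k \<subseteq> A"
  shows "measure lborel (B \<inter> dyadic_cell n k)
    = measure lborel B / measure lborel A * measure lborel (dyadic_cell n k)"
proof -
  define e where "e = n - N"
  have n: "n = N + e"
    using cell(1) by (simp add: e_def)
  define \<beta> where "\<beta> = measure lborel (B \<inter> dyadic_cell n k)"
  have \<beta>: "measure lborel (B \<inter> dyadic_cell n j) = \<beta>" if "dyadic_cell n j \<subseteq> A" for j
    unfolding \<beta>_def using A(2) that cell(2) B(1) inv by (rule invariant_set_measure_cells_eq)
  have half: "measure lborel (B \<inter> dyadic_cell N c) = 2 ^ e * \<beta>" if "c = a \<or> c = b" for c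
  proof (rule measure_Int_dyadic_cell_uniform[OF B(1)])
    fix i :: nat assume "i < 2 ^ e"
    then have "dyadic_cell n (c * 2 ^ e + int i) \<subseteq> A"
      using that dyadic_cell_split[of N c e] unfolding A(1) n by blast
    then show "measure lborel (B \<inter> dyadic_cell (N + e) (c * 2 ^ e + int i)) = \<beta>"
      using \<beta> unfolding n by blast
  qed
  have "measure lborel B = measure lborel ((B \<inter> dyadic_cell N a) \<union> (B \<inter> dyadic_cell N b))"
    using B(2) unfolding A(1) by (intro arg_cong[where f = "measure lborel"]) blast
  also have "\<dots> = measure lborel (B \<inter> dyadic_cell N a) + measure lborel (B \<inter> dyadic_cell N b)"
    using B(1) dyadic_cells_disjoint[OF ab, of N] emeasure_Int_dyadic_cell_finite
    by (intro measure_Union) (auto simp: less_top)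
  also have "\<dots> = 2 * 2 ^ e * \<beta>"
    using half by simp
  finally have "measure lborel B / measure lborel A = 2 ^ n * \<beta>"
    by (simp add: A(1) measure_two_dyadic_cells[OF ab] n power_add)
  then show ?thesis
    by (simp add: \<beta>_def measure_dyadic_cell)
qed

lemma emeasure_density_cmult_indicator:
  assumes [measurable]: "S \<in> sets M" "Y \<in> sets M"
  shows "emeasure (density M (\<lambda>x. c * indicator S x)) Y = c * emeasure M (S \<inter> Y)"
proof -
  have "emeasure (density M (\<lambda>x. c * indicator S x)) Y = (\<integral>\<^sup>+ x. c * indicator S x * indicator Y x \<partial>M)"
    by (rule emeasure_density) simp_all
  also have "\<dots> = (\<integral>\<^sup>+ x. c * indicator (S \<inter> Y) x \<partial>M)"
    by (simp add: indicator_inter_arith mult.assoc)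
  also have "\<dots> = c * emeasure M (S \<inter> Y)"
    by (rule nn_integral_cmult_indicator) simp
  finally show ?thesis .
qed

text \<open>Both sides are measures in \<open>X\<close>, namely densities, and they agree on the fine cells.\<close>

lemma emeasure_Int_proportional:
  fixes A B :: "real set" and c :: ennreal
  assumes "A \<in> sets borel" "B \<in> sets borel"
    and cells: "\<And>Y. Y \<in> fine_dyadic_cells N \<Longrightarrow>
      emeasure lborel (B \<inter> Y) = c * emeasure lborel (A \<inter> Y)"
    and "X \<in> sets borel"
  shows "emeasure lborel (B \<inter> X) = c * emeasure lborel (A \<inter> X)"
proof -
  let ?MB = "density lborel (\<lambda>x. 1 * indicator B x)" and ?MA = "density lborel (\<lambda>x. c * indicator A x)"
  have density: "emeasure ?MB Y = emeasure lborel (B \<inter> Y)" "emeasure ?MA Y = c * emeasure lborel (A \<inter> Y)"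
    if "Y \<in> sets borel" for Y
    using emeasure_density_cmult_indicator[of B lborel Y 1] emeasure_density_cmult_indicator[of A lborel Y c]
      assms(1,2) that by simp_all
  have "?MB = ?MA"
  proof (rule measure_eqI_generator_eq_countable[OF Int_stable_fine_dyadic_cells])
    show "sets ?MB = sigma_sets UNIV (fine_dyadic_cells N)" "sets ?MA = sigma_sets UNIV (fine_dyadic_cells N)"
      using sets_borel_eq_sigma_fine_dyadic_cells by simp_all
    show "range (dyadic_cell N) \<subseteq> fine_dyadic_cells N"
      unfolding fine_dyadic_cells_def by blast
    have "x \<in> dyadic_cell N (\<lceil>x * 2 ^ N\<rceil> - 1)" for x
      by (simp add: mem_dyadic_cell_iff_ceiling)
    then show "\<Union> (range (dyadic_cell N)) = UNIV"
      by blast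
    show "emeasure ?MB Y = emeasure ?MA Y" if "Y \<in> fine_dyadic_cells N" for Y
      using that fine_dyadic_cells_borel cells density by (simp add: subset_eq)
    show "emeasure ?MB Y \<noteq> \<infinity>" if "Y \<in> range (dyadic_cell N)" for Y
      using that density emeasure_Int_dyadic_cell_finite by (auto simp: less_top)
  qed auto
  then have "emeasure ?MB X = emeasure ?MA X"
    by (rule arg_cong)
  then show ?thesis
    using density[OF assms(4)] by simp
qed

lemma invariant_set_emeasure_fine_cells:
  fixes A B :: "real set"
  assumes ab: "a \<noteq> b" and A: "A = dyadic_cell N a \<union> dyadic_cell N b" "A \<subseteq> {0<..1}"
    and B: "B \<in> sets borel" "B \<subseteq> A" and inv: "\<forall>h\<in>G_dyad_on A. {t \<in> {0<..1}. h t \<in> B} = B"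
    and Y: "Y \<in> fine_dyadic_cells N"
  shows "emeasure lborel (B \<inter> Y)
    = ennreal (measure lborel B / measure lborel A) * emeasure lborel (A \<inter> Y)"
proof -
  from Y consider "Y = {}" | n k where "Y = dyadic_cell n k" "N \<le> n"
    unfolding fine_dyadic_cells_def by blast
  then show ?thesis
  proof cases
    case (2 n k)
    then consider "Y \<subseteq> A" | "A \<inter> Y = {}"
      using dyadic_cells_nested[of N n a k] dyadic_cells_nested[of N n b k] unfolding A(1) by blast
    then show ?thesis
    proof cases
      case 1
      have "emeasure lborel (B \<inter> Y) = ennreal (measure lborel (B \<inter> Y))"
        using emeasure_Int_dyadic_cell_finite by (simp add: 2 emeasure_eq_ennreal_measure less_top)
      also have "measure lborel (B \<inter> Y) = measure lborel B / measure lborel A * measure lborel Y"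
        unfolding 2 using 1 2 by (intro invariant_set_measure_fine_cell[OF ab A B inv]) simp_all
      also have "ennreal \<dots> = ennreal (measure lborel B / measure lborel A) * ennreal (measure lborel Y)"
        by (rule ennreal_mult) simp_all
      also have "ennreal (measure lborel Y) = emeasure lborel (A \<inter> Y)"
        using 1 by (simp add: 2 Int_absorb1 emeasure_dyadic_cell measure_dyadic_cell)
      finally show ?thesis .
    next
      case 2
      moreover from this have "B \<inter> Y = {}"
        using B(2) by blast
      ultimately show ?thesis
        by simp
    qed
  qed simp
qed

lemma invariant_subset_null_or_full:
  fixes A B :: "real set"
  assumes ab: "a \<noteq> b" and A: "A = dyadic_cell N a \<union> dyadic_cell N b" "A \<subseteq> {0<..1}"
    and B: "B \<in> sets borel" "B \<subseteq> A" and inv: "\<forall>h\<in>G_dyad_on A. {t \<in> {0<..1}. h t \<in> B} = B"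
  shows "measure lborel B = 0 \<or> measure lborel B = measure lborel A"
proof -
  define c where "c = measure lborel B / measure lborel A"
  have "bounded B"
    using B(2) unfolding A(1) by (meson bounded_Un bounded_dyadic_cell bounded_subset)
  have "emeasure lborel (B \<inter> B) = ennreal c * emeasure lborel (A \<inter> B)"
    unfolding c_def
    by (rule emeasure_Int_proportional[OF _ B(1) invariant_set_emeasure_fine_cells[OF ab A B inv] B(1)])
      (simp add: A(1))
  then have "emeasure lborel B = ennreal c * emeasure lborel B"
    using B(2) by (simp add: Int_absorb1)
  moreover have "emeasure lborel B = ennreal (measure lborel B)"
    using emeasure_bounded_finite[OF \<open>bounded B\<close>] by (simp add: emeasure_eq_ennreal_measure less_top)
  moreover have "0 \<le> c"
    by (simp add: c_def)
  ultimately have "measure lborel B = c * measure lborel B"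
    by (simp flip: ennreal_mult)
  then have "measure lborel B = 0 \<or> c = 1"
    by simp
  moreover have "measure lborel A \<noteq> 0"
    by (simp add: A(1) measure_two_dyadic_cells[OF ab])
  ultimately show ?thesis
    by (auto simp: c_def)
qed

lemma G_dyad_on_pair_ergodic:
  assumes lm: "1 \<le> l" "l \<le> 2 ^ N" "1 \<le> m" "m \<le> 2 ^ N" "l \<noteq> m"
    and A: "A = dyad_int N l \<union> dyad_int N m"
    and B: "B \<in> sets borel" "B \<subseteq> A" and inv: "\<forall>h\<in>G_dyad_on A. {t \<in> {0<..1}. h t \<in> B} = B"
  shows "measure lborel B = 0 \<or> measure lborel B = measure lborel A"
proof (rule invariant_subset_null_or_full)
  show "int l - 1 \<noteq> int m - 1"
    using lm(5) by simp
  show "A = dyadic_cell N (int l - 1) \<union> dyadic_cell N (int m - 1)"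
    by (simp add: A dyad_int_eq_dyadic_cell)
  show "A \<subseteq> {0<..1}"
    using A dyad_int_subset_unit lm by blast
qed (use B inv in auto)

section \<open>Local ergodicity of dyadic open sets\<close>

lemma sigma_algebra_F_dyad: "sigma_algebra {0<..1} (F_dyad N)"
  unfolding F_dyad_def by (rule sigma_algebra_sigma_sets) (use dyad_int_subset_unit in blast)

lemma dyadic_cell_in_F_dyad:
  assumes "dyadic_cell N j \<subseteq> {0<..1}"
  shows "dyadic_cell N j \<in> F_dyad N"
proof -
  have j: "0 \<le> j" "j < 2 ^ N"
    using assms dyadic_cell_subset_unit_iff by blast+
  then have "dyadic_cell N j = dyad_int N (Suc (nat j))" "1 \<le> Suc (nat j)" "Suc (nat j) \<le> 2 ^ N"
    by (auto simp: dyad_int_eq_dyadic_cell Suc_le_eq nat_less_iff)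
  then show ?thesis
    unfolding F_dyad_def by (blast intro: sigma_sets.Basic)
qed

lemma dyad_int_in_F_dyad:
  assumes "d \<le> N" "1 \<le> k" "k \<le> 2 ^ d"
  shows "dyad_int d k \<in> F_dyad N"
proof -
  interpret F: sigma_algebra "{0<..1::real}" "F_dyad N"
    by (rule sigma_algebra_F_dyad)
  obtain e where N: "N = d + e"
    using assms(1) le_Suc_ex by blast
  have split: "dyad_int d k = (\<Union>i<(2::nat) ^ e. dyadic_cell N ((int k - 1) * 2 ^ e + int i))"
    unfolding dyad_int_eq_dyadic_cell N by (rule dyadic_cell_split)
  have "dyad_int d k \<subseteq> {0<..1}"
    using assms(2,3) by (rule dyad_int_subset_unit)
  then have "dyadic_cell N ((int k - 1) * 2 ^ e + int i) \<in> F_dyad N" if "i < 2 ^ e" for i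
    using split that by (intro dyadic_cell_in_F_dyad) blast
  then show ?thesis
    unfolding split by (intro F.finite_UN) auto
qed

lemma Union_dyad_int_in_F_dyad:
  assumes "finite P" "\<And>d k. (d, k) \<in> P \<Longrightarrow> 1 \<le> k \<and> k \<le> 2 ^ d"
  shows "(\<Union>(d, k)\<in>P. dyad_int d k) \<in> F_dyad (Max (fst ` P))"
proof -
  interpret F: sigma_algebra "{0<..1::real}" "F_dyad (Max (fst ` P))"
    by (rule sigma_algebra_F_dyad)
  have "dyad_int d k \<in> F_dyad (Max (fst ` P))" if "(d, k) \<in> P" for d k
    using that assms by (intro dyad_int_in_F_dyad) (auto simp: rev_image_eqI)
  then show ?thesis
    using assms(1) by (intro F.finite_UN) auto
qed

lemma measure_Union_dyad_int_pos:
  assumes "finite P" "P \<noteq> {}" "\<And>d k. (d, k) \<in> P \<Longrightarrow> 1 \<le> k \<and> k \<le> 2 ^ d"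
  shows "0 < measure lborel (\<Union>(d, k)\<in>P. dyad_int d k)"
proof -
  let ?U = "\<Union>(d, k)\<in>P. dyad_int d k"
  obtain d k where dk: "(d, k) \<in> P"
    using assms(2) by auto
  have "?U \<subseteq> {0<..1}"
    using assms(3) dyad_int_subset_unit by blast
  moreover have "?U \<in> sets borel"
    using assms(1) by (intro sets.finite_UN) (auto simp: dyad_int_eq_dyadic_cell)
  ultimately have "?U \<in> fmeasurable lborel"
    using emeasure_bounded_finite[OF bounded_subset[OF bounded_Ioc]] by (auto simp: fmeasurable_def)
  then have "measure lborel (dyad_int d k) \<le> measure lborel ?U"
    using dk by (intro measure_mono_fmeasurable) (auto simp: dyad_int_eq_dyadic_cell)
  moreover have "0 < measure lborel (dyad_int d k)"
    by (simp add: dyad_int_eq_dyadic_cell measure_dyadic_cell)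
  ultimately show ?thesis
    by linarith
qed

lemma finite_locally_ergodic_Union_dyad_int:
  fixes E :: "real set" and P :: "(nat \<times> nat) set"
  assumes P: "finite P" "P \<noteq> {}" "\<And>d k. (d, k) \<in> P \<Longrightarrow> 1 \<le> k \<and> k \<le> 2 ^ d \<and> dyad_int d k \<subseteq> E"
  shows "finite_locally_ergodic (G_dyad_on E) (\<Union>(d, k)\<in>P. dyad_int d k)"
proof -
  let ?U = "\<Union>(d, k)\<in>P. dyad_int d k"
  have P': "\<And>d k. (d, k) \<in> P \<Longrightarrow> 1 \<le> k \<and> k \<le> 2 ^ d"
    using P(3) by blast
  have "\<exists>H. is_subgroup_of H (G_dyad_on E) \<and> (\<forall>h\<in>H. \<forall>t\<in>{0<..1} - A. h t = t) \<and>
      (\<forall>B \<in> sets borel. B \<subseteq> A \<longrightarrow> (\<forall>h\<in>H. {t \<in> {0<..1}. h t \<in> B} = B) \<longrightarrow>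
        measure lborel B = 0 \<or> measure lborel B = measure lborel A)"
    if lm: "1 \<le> l" "l \<le> 2 ^ N" "1 \<le> m" "m \<le> 2 ^ N" "l \<noteq> m"
      and A: "A = dyad_int N l \<union> dyad_int N m" "A \<subseteq> ?U" for N l m A
  proof (intro exI[of _ "G_dyad_on A"] conjI ballI impI)
    show "is_subgroup_of (G_dyad_on A) (G_dyad_on E)"
      using A(2) P(3) by (intro G_dyad_on_subgroup) blast
    show "h t = t" if "h \<in> G_dyad_on A" "t \<in> {0<..1} - A" for h t
      using that by (simp add: G_dyad_on_def)
    show "measure lborel B = 0 \<or> measure lborel B = measure lborel A"
      if "B \<in> sets borel" "B \<subseteq> A" "\<forall>h\<in>G_dyad_on A. {t \<in> {0<..1}. h t \<in> B} = B" for B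
      using lm A(1) that by (rule G_dyad_on_pair_ergodic)
  qed
  moreover have "?U \<in> sets borel"
    using P(1) by (intro sets.finite_UN) (auto simp: dyad_int_eq_dyadic_cell)
  ultimately show ?thesis
    unfolding finite_locally_ergodic_def Let_def
    using measure_Union_dyad_int_pos[OF P(1,2) P'] Union_dyad_int_in_F_dyad[OF P(1) P'] by blast
qed

lemma dyad_open_set_eq_Union:
  assumes "E \<in> dyad_open_sets"
  shows "E = (\<Union>(d, k)\<in>{(d, k). 1 \<le> k \<and> k \<le> 2 ^ d \<and> dyad_int d k \<subseteq> E}. dyad_int d k)"
  using assms unfolding dyad_open_sets_def by blast

lemma incseq_Union_from_nat_into: "incseq (\<lambda>n. \<Union>x\<in>from_nat_into P ` {..n}. f x)"
  unfolding incseq_def by (intro allI impI UN_mono image_mono) auto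

lemma Union_Union_from_nat_into:
  assumes "countable P" "P \<noteq> {}"
  shows "(\<Union>n. \<Union>x\<in>from_nat_into P ` {..n}. f x) = (\<Union>x\<in>P. f x)"
proof -
  have "(\<Union>n. from_nat_into P ` {..n}) = P"
    using range_from_nat_into[OF assms(2,1)] by (simp flip: image_UN add: UN_atMost_UNIV)
  then show ?thesis
    unfolding UN_UN_flatten[symmetric] by simp
qed

theorem lemma5p1:
  assumes "E \<in> dyad_open_sets" and "E \<noteq> {}"
  shows "locally_ergodic (G_dyad_on E) E"
proof -
  define P where "P = {(d, k). 1 \<le> k \<and> k \<le> 2 ^ d \<and> dyad_int d k \<subseteq> E}"
  have E: "E = (\<Union>(d, k)\<in>P. dyad_int d k)"
    unfolding P_def using assms(1) by (rule dyad_open_set_eq_Union)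
  then have P: "countable P" "P \<noteq> {}"
    using assms(2) countableI_type by auto
  define En where "En n = (\<Union>(d, k)\<in>from_nat_into P ` {..n}. dyad_int d k)" for n
  have "finite_locally_ergodic (G_dyad_on E) (En n)" for n
  proof -
    have "from_nat_into P ` {..n} \<subseteq> P"
      using from_nat_into[OF P(2)] by blast
    then show ?thesis
      unfolding En_def by (intro finite_locally_ergodic_Union_dyad_int) (auto simp: P_def)
  qed
  moreover have "incseq En"
    unfolding En_def by (rule incseq_Union_from_nat_into)
  moreover have "E = (\<Union>n. En n)"
    unfolding En_def E using P by (rule Union_Union_from_nat_into[symmetric])
  ultimately show ?thesis
    unfolding locally_ergodic_def by blast
qed

end
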